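(* Let $R$ be a (von Neumann) regular $K$-algebra, $J$ an ideal of $R$, and $\pi : R \to R/J$ the quotient map. If $A$ is a finite dimensional subalgebra of $R/J$, then $R$ has a finite dimensional subalgebra $T$ such that $\pi$ restricts to an algebra isomorphism of $T$ onto $A$. In particular, if $R/J$ is finite dimensional, there is a subalgebra $T$ of $R$ with $R = T \oplus J$ as $K$-vector spaces.
   Context: $K$ is a field. All algebras are associative but not necessarily unital $K$-algebras; ideals are two-sided ring ideals that are also $K$-subspaces. A ring $R$ is (von Neumann) regular if for every $x\in R$ there is $y \in R$ with $xyx = x$. *)

theory Defs
  imports Complex_Main
begin

text \<open>An associative, not necessarily unital K-algebra structure on a type of class ring
  (HOL's class ring is associative and non-unital), given by a scalar multiplication.\<close>
definition K_algebra :: "('k::field \<Rightarrow> 'r::ring \<Rightarrow> 'r) \<Rightarrow> bool" where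
  "K_algebra scale \<longleftrightarrow> vector_space scale \<and>
     (\<forall>c x y. scale c (x * y) = scale c x * y \<and> scale c (x * y) = x * scale c y)"

definition vn_regular :: "'r::ring itself \<Rightarrow> bool" where
  "vn_regular _ \<longleftrightarrow> (\<forall>x::'r. \<exists>y. x * y * x = x)"

definition alg_ideal :: "('k::field \<Rightarrow> 'r::ring \<Rightarrow> 'r) \<Rightarrow> 'r set \<Rightarrow> bool" where
  "alg_ideal scale J \<longleftrightarrow> module.subspace scale J \<and>
     (\<forall>x\<in>J. \<forall>r. r * x \<in> J \<and> x * r \<in> J)"

definition subalgebra :: "('k::field \<Rightarrow> 'r::ring \<Rightarrow> 'r) \<Rightarrow> 'r set \<Rightarrow> bool" where
  "subalgebra scale T \<longleftrightarrow> module.subspace scale T \<and> (\<forall>x\<in>T. \<forall>y\<in>T. x * y \<in> T)"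

definition fin_dim :: "('k::field \<Rightarrow> 'r::ring \<Rightarrow> 'r) \<Rightarrow> 'r set \<Rightarrow> bool" where
  "fin_dim scale A \<longleftrightarrow> (\<exists>F. finite F \<and> F \<subseteq> A \<and> module.span scale F = A)"

definition alg_hom :: "('k::field \<Rightarrow> 'r::ring \<Rightarrow> 'r) \<Rightarrow> ('k \<Rightarrow> 's::ring \<Rightarrow> 's) \<Rightarrow> ('r \<Rightarrow> 's) \<Rightarrow> bool" where
  "alg_hom s1 s2 f \<longleftrightarrow> Vector_Spaces.linear s1 s2 f \<and> (\<forall>x y. f (x * y) = f x * f y)"

end

theory Submission
  imports Defs
begin

text \<open>Let s be a linear section of \<pi>; its multiplicativity defects s a * s b - s (a * b) lie in J.
  For a finite spanning set F of A, finitely many defects, together with their left multiples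
  by s F, generate a right ideal I that contains all defects on A and is stable under left
  multiplication by s A. In a regular ring a finitely generated right ideal has an idempotent
  generator f, which is a left unit for I and lies in J. The corrected section
  g a = s a - f * s a still lifts \<pi>, and since s a * f \<in> I we get f * s a * f = s a * f, which
  makes g multiplicative on A; T is its image.\<close>

inductive_set right_ideal_span :: "('k::field \<Rightarrow> 'r::ring \<Rightarrow> 'r) \<Rightarrow> 'r set \<Rightarrow> 'r set"
  for scale G where
  gen: "g \<in> G \<Longrightarrow> g \<in> right_ideal_span scale G"
| zero: "0 \<in> right_ideal_span scale G"
| add: "y \<in> right_ideal_span scale G \<Longrightarrow> w \<in> right_ideal_span scale G \<Longrightarrow> y + w \<in> right_ideal_span scale G"
| diff: "y \<in> right_ideal_span scale G \<Longrightarrow> w \<in> right_ideal_span scale G \<Longrightarrow> y - w \<in> right_ideal_span scale G"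
| mult: "y \<in> right_ideal_span scale G \<Longrightarrow> y * r \<in> right_ideal_span scale G"
| scale: "y \<in> right_ideal_span scale G \<Longrightarrow> scale c y \<in> right_ideal_span scale G"

lemma right_ideal_span_mono:
  assumes "G \<subseteq> H" "y \<in> right_ideal_span sc G"
  shows "y \<in> right_ideal_span sc H"
  using assms(2) by induction (use assms(1) in \<open>auto intro: right_ideal_span.intros\<close>)

lemma right_ideal_span_subspace:
  assumes "K_algebra sc"
  shows "module.subspace sc (right_ideal_span sc G)"
proof -
  interpret vector_space sc using assms unfolding K_algebra_def by blast
  show ?thesis by (auto simp: subspace_def intro: right_ideal_span.intros)
qed

lemma right_ideal_span_subset:
  assumes "K_algebra sc" "alg_ideal sc J" "G \<subseteq> J"
  shows "right_ideal_span sc G \<subseteq> J"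
proof
  interpret vector_space sc using assms(1) unfolding K_algebra_def by blast
  have J: "subspace J" "\<And>x r. x \<in> J \<Longrightarrow> x * r \<in> J"
    using assms(2) unfolding alg_ideal_def by auto
  show "y \<in> J" if "y \<in> right_ideal_span sc G" for y
    using that by induction
      (use assms(3) J in \<open>auto intro: subspace_0 subspace_add subspace_diff subspace_scale\<close>)
qed

lemma right_ideal_span_left_unit:
  assumes "K_algebra sc" "\<forall>g\<in>G. f * g = g" "y \<in> right_ideal_span sc G"
  shows "f * y = y"
  using assms(3)
proof (induction rule: right_ideal_span.induct)
  case (mult y r) then show ?case by (metis mult.assoc)
next
  case (scale y c) then show ?case using assms(1) unfolding K_algebra_def by metis
qed (use assms(2) in \<open>auto simp: distrib_left right_diff_distrib\<close>)

lemma right_ideal_span_left_mult: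
  assumes "K_algebra sc" "\<forall>g\<in>G. x * g \<in> right_ideal_span sc G" "y \<in> right_ideal_span sc G"
  shows "x * y \<in> right_ideal_span sc G"
  using assms(3)
proof (induction rule: right_ideal_span.induct)
  case (mult y r) then show ?case by (metis mult.assoc right_ideal_span.mult)
next
  case (scale y c) then show ?case
    using assms(1) unfolding K_algebra_def by (metis right_ideal_span.scale)
qed (use assms(2) in \<open>auto simp: distrib_left right_diff_distrib intro: right_ideal_span.intros\<close>)

text \<open>The inductive step of the proof that finitely generated right ideals of a regular ring
  are generated by idempotents: k = h * z - h * z * e is an idempotent orthogonal to e with
  k * h = h.\<close>

lemma idempotent_absorbing_extension:
  fixes e a z :: "'r::ring"
  defines "h \<equiv> a - e * a"
  defines "f \<equiv> e + (h * z - h * z * e)"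
  assumes ee: "e * e = e" and hzh: "h * z * h = h"
  shows "f * f = f" "f * e = e" "f * a = a"
proof -
  define k where "k = h * z - h * z * e"
  have eh: "e * h = 0" unfolding h_def by (simp add: right_diff_distrib ee flip: mult.assoc)
  have ek: "e * k = 0" unfolding k_def by (simp add: right_diff_distrib eh flip: mult.assoc)
  have ke: "k * e = 0" unfolding k_def by (simp add: left_diff_distrib ee mult.assoc)
  have kh: "k * h = h" unfolding k_def by (simp add: left_diff_distrib eh mult.assoc hzh[unfolded mult.assoc])
  have "k * k = k * (h * z - h * z * e)" by (simp add: k_def)
  also have "\<dots> = k * h * z - k * h * z * e" by (simp add: right_diff_distrib mult.assoc)
  also have "\<dots> = k" by (simp only: kh) (simp add: k_def)
  finally have kk: "k * k = k" .
  have f: "f = e + k" unfolding f_def k_def ..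
  show fe: "f * e = e" unfolding f by (simp add: distrib_right ee ke)
  show "f * f = f" unfolding f by (simp add: distrib_left distrib_right ee ek ke kk)
  have "f * h = h" unfolding f by (simp add: distrib_right eh kh)
  then show "f * a = a"
    using fe by (simp add: h_def right_diff_distrib flip: mult.assoc)
qed

lemma vn_regular_right_ideal_span_idempotent:
  assumes "vn_regular TYPE('r::ring)" "finite G"
  shows "\<exists>f::'r. f * f = f \<and> f \<in> right_ideal_span sc G \<and> (\<forall>g\<in>G. f * g = g)"
  using assms(2)
proof (induction rule: finite_induct)
  case empty
  show ?case by (intro exI[of _ 0]) (auto intro: right_ideal_span.zero)
next
  case (insert a G)
  then obtain e where ee: "e * e = e" and eG: "e \<in> right_ideal_span sc G"
    and e_unit: "\<forall>g\<in>G. e * g = g" by blast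
  define h where "h = a - e * a"
  obtain z where hzh: "h * z * h = h" using assms(1) unfolding vn_regular_def by blast
  define f where "f = e + (h * z - h * z * e)"
  have ff: "f * f = f" and fe: "f * e = e" and fa: "f * a = a"
    using idempotent_absorbing_extension[of e a z] ee hzh unfolding f_def h_def by simp_all
  have "\<forall>g\<in>insert a G. f * g = g"
    using fa fe e_unit by (metis insert_iff mult.assoc)
  moreover have "f \<in> right_ideal_span sc (insert a G)"
  proof -
    have e: "e \<in> right_ideal_span sc (insert a G)"
      using right_ideal_span_mono[OF _ eG] by blast
    have "h \<in> right_ideal_span sc (insert a G)"
      unfolding h_def by (intro right_ideal_span.diff right_ideal_span.gen right_ideal_span.mult e) simp
    then show ?thesis
      unfolding f_def by (intro right_ideal_span.add right_ideal_span.diff right_ideal_span.mult e)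
  qed
  ultimately show ?case using ff by blast
qed

lemma K_algebra_linear_mult_right:
  assumes "K_algebra sc"
  shows "Vector_Spaces.linear sc sc (\<lambda>x. x * y)"
  using assms unfolding K_algebra_def Vector_Spaces.linear_iff by (auto simp: distrib_right)

lemma K_algebra_linear_mult_left:
  assumes "K_algebra sc"
  shows "Vector_Spaces.linear sc sc (\<lambda>x. y * x)"
  using assms unfolding K_algebra_def Vector_Spaces.linear_iff by (metis distrib_left)

lemma linear_span_into_subspace:
  assumes "Vector_Spaces.linear s1 s2 \<phi>" "module.subspace s2 W" "\<phi> ` F \<subseteq> W"
    and "x \<in> module.span s1 F"
  shows "\<phi> x \<in> W"
proof -
  interpret Vector_Spaces.linear s1 s2 \<phi> by (fact assms(1))
  have "\<phi> x \<in> vs2.span (\<phi> ` F)" using assms(4) by (simp add: span_image)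
  with assms(2,3) show ?thesis using vs2.span_minimal by blast
qed

lemma linear_left_mult_span_into_subspace:
  fixes sR :: "'k::field \<Rightarrow> 'r::ring \<Rightarrow> 'r" and sQ :: "'k \<Rightarrow> 'q::ring \<Rightarrow> 'q"
  assumes "K_algebra sR" "Vector_Spaces.linear sQ sR s" "module.subspace sR W"
    and "\<And>b. b \<in> F \<Longrightarrow> s b * y \<in> W" "a \<in> module.span sQ F"
  shows "s a * y \<in> W"
proof -
  have "Vector_Spaces.linear sQ sR (\<lambda>a. s a * y)"
    using Vector_Spaces.linear_compose[OF assms(2) K_algebra_linear_mult_right[OF assms(1)]]
    by (simp add: o_def)
  from linear_span_into_subspace[OF this assms(3) _ assms(5)] show ?thesis
    using assms(4) by blast
qed

lemma linear_mult_defect_span_into_subspace: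
  fixes sR :: "'k::field \<Rightarrow> 'r::ring \<Rightarrow> 'r" and sQ :: "'k \<Rightarrow> 'q::ring \<Rightarrow> 'q"
  assumes KR: "K_algebra sR" and KQ: "K_algebra sQ" and s: "Vector_Spaces.linear sQ sR s"
    and W: "module.subspace sR W"
    and F: "\<And>a b. a \<in> F \<Longrightarrow> b \<in> F \<Longrightarrow> s a * s b - s (a * b) \<in> W"
    and a: "a \<in> module.span sQ F" and b: "b \<in> module.span sQ F"
  shows "s a * s b - s (a * b) \<in> W"
proof -
  interpret QR: vector_space_pair sQ sR
    using KQ KR unfolding K_algebra_def vector_space_pair_def by blast
  have lin_mult: "Vector_Spaces.linear sQ sR (\<lambda>x. s (m x))"
    if "Vector_Spaces.linear sQ sQ m" for m
    using Vector_Spaces.linear_compose[OF that s] by (simp add: o_def)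
  have "Vector_Spaces.linear sQ sR (\<lambda>x. s x * s b' - s (x * b'))" for b'
    using Vector_Spaces.linear_compose[OF s K_algebra_linear_mult_right[OF KR]]
      lin_mult[OF K_algebra_linear_mult_right[OF KQ]]
    by (intro QR.linear_compose_sub) (simp_all add: o_def)
  then have defect_F: "s a * s b' - s (a * b') \<in> W" if "b' \<in> F" for b'
    using linear_span_into_subspace[OF _ W _ a] F that by blast
  have "Vector_Spaces.linear sQ sR (\<lambda>x. s a * s x - s (a * x))"
    using Vector_Spaces.linear_compose[OF s K_algebra_linear_mult_left[OF KR]]
      lin_mult[OF K_algebra_linear_mult_left[OF KQ]]
    by (intro QR.linear_compose_sub) (simp_all add: o_def)
  then show ?thesis using linear_span_into_subspace[OF _ W _ b] defect_F by blast
qed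

lemma idempotent_correction_mult:
  fixes f u v w :: "'r::ring"
  assumes "f * (u * f) = u * f" and "f * (u * v - w) = u * v - w"
  shows "(u - f * u) * (v - f * v) = w - f * w"
proof -
  have "(u - f * u) * (v - f * v) = u * v - f * (u * v)"
    using assms(1) by (simp add: algebra_simps flip: mult.assoc)
  also have "\<dots> = w - f * w"
    using assms(2) by (simp add: right_diff_distrib) (metis diff_add_cancel diff_diff_eq2 add_diff_cancel_left')
  finally show ?thesis .
qed

lemma alg_hom_kernel_ideal:
  assumes "alg_hom s1 s2 \<pi>"
  shows "alg_ideal s1 {x. \<pi> x = 0}"
proof -
  interpret Vector_Spaces.linear s1 s2 \<pi> using assms unfolding alg_hom_def by blast
  show ?thesis
    using assms subspace_kernel unfolding alg_ideal_def alg_hom_def by simp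
qed

lemma linear_section_image_subalgebra:
  assumes g: "Vector_Spaces.linear sQ sR g" and A: "subalgebra sQ A" "fin_dim sQ A"
    and g_mult: "\<And>a b. a \<in> A \<Longrightarrow> b \<in> A \<Longrightarrow> g a * g b = g (a * b)"
    and \<pi>_g: "\<And>a. a \<in> A \<Longrightarrow> \<pi> (g a) = a"
  shows "subalgebra sR (g ` A) \<and> fin_dim sR (g ` A) \<and> bij_betw \<pi> (g ` A) A"
proof -
  interpret Vector_Spaces.linear sQ sR g by (fact g)
  obtain F where F: "finite F" "F \<subseteq> A" "vs1.span F = A"
    using A(2) unfolding fin_dim_def by blast
  have span: "g ` A = vs2.span (g ` F)" using F(3) span_image by simp
  have "subalgebra sR (g ` A)"
    unfolding subalgebra_def
  proof
    show "vs2.subspace (g ` A)" using A(1) subspace_image unfolding subalgebra_def by blast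
    show "\<forall>x\<in>g ` A. \<forall>y\<in>g ` A. x * y \<in> g ` A"
      using A(1) unfolding subalgebra_def by (force simp: g_mult)
  qed
  moreover have "fin_dim sR (g ` A)"
    unfolding fin_dim_def using F span vs2.span_superset by blast
  moreover have "bij_betw \<pi> (g ` A) A"
    unfolding bij_betw_def inj_on_def by (auto simp: \<pi>_g image_image)
  ultimately show ?thesis by blast
qed

lemma finite_right_ideal_absorbing_defects:
  fixes sR :: "'k::field \<Rightarrow> 'r::ring \<Rightarrow> 'r" and sQ :: "'k \<Rightarrow> 'q::ring \<Rightarrow> 'q"
  assumes KR: "K_algebra sR" and KQ: "K_algebra sQ" and s: "Vector_Spaces.linear sQ sR s"
    and A: "subalgebra sQ A" "fin_dim sQ A"
    and J: "alg_ideal sR J" and defect_J: "\<And>a b. a \<in> A \<Longrightarrow> b \<in> A \<Longrightarrow> s a * s b - s (a * b) \<in> J"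
  obtains G where "G \<subseteq> J" "finite G"
    "\<And>a b. a \<in> A \<Longrightarrow> b \<in> A \<Longrightarrow> s a * s b - s (a * b) \<in> right_ideal_span sR G"
    "\<And>a y. a \<in> A \<Longrightarrow> y \<in> right_ideal_span sR G \<Longrightarrow> s a * y \<in> right_ideal_span sR G"
proof -
  obtain F where F: "finite F" "F \<subseteq> A" "module.span sQ F = A"
    using A(2) unfolding fin_dim_def by blast
  define D where "D = {s a * s b - s (a * b) | a b. a \<in> F \<and> b \<in> F}"
  \<comment> \<open>the products s b * d make the ideal stable under s F:
    s b * (s b' * d) = s (b * b') * d + (s b * s b' - s (b * b')) * d\<close>
  define G where "G = D \<union> {s b * d | b d. b \<in> F \<and> d \<in> D}"
  let ?I = "right_ideal_span sR G"
  have I: "module.subspace sR ?I" by (rule right_ideal_span_subspace[OF KR])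
  have defects: "s a * s b - s (a * b) \<in> ?I" if "a \<in> A" "b \<in> A" for a b
  proof (rule linear_mult_defect_span_into_subspace[OF KR KQ s I, where F = F])
    show "s a' * s b' - s (a' * b') \<in> ?I" if "a' \<in> F" "b' \<in> F" for a' b'
      unfolding G_def D_def using that by (intro right_ideal_span.gen UnI1) blast
  qed (use that F(3) in simp_all)
  have D_left: "s a * d \<in> ?I" if "a \<in> A" "d \<in> D" for a d
  proof (rule linear_left_mult_span_into_subspace[OF KR s I, where F = F])
    show "s b * d \<in> ?I" if "b \<in> F" for b
      unfolding G_def using that \<open>d \<in> D\<close> by (intro right_ideal_span.gen UnI2) blast
  qed (use that F(3) in simp)
  have F_left: "s b * y \<in> ?I" if "b \<in> F" "y \<in> ?I" for b y
  proof (rule right_ideal_span_left_mult[OF KR _ that(2)])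
    show "\<forall>g\<in>G. s b * g \<in> ?I"
    proof
      fix g assume "g \<in> G"
      then consider "g \<in> D" | b' d where "b' \<in> F" "d \<in> D" "g = s b' * d"
        unfolding G_def by blast
      then show "s b * g \<in> ?I"
      proof cases
        case 1
        then show ?thesis using that(1) by (auto simp: G_def intro!: right_ideal_span.gen)
      next
        case 2
        have "s b * g = s (b * b') * d + (s b * s b' - s (b * b')) * d"
          unfolding 2 by (simp add: algebra_simps)
        moreover have "s (b * b') * d \<in> ?I"
          using D_left A(1) F(2) that(1) 2 unfolding subalgebra_def by blast
        moreover have "(s b * s b' - s (b * b')) * d \<in> ?I"
          unfolding G_def D_def using that(1) 2(1)
          by (intro right_ideal_span.mult right_ideal_span.gen) blast
        ultimately show ?thesis by (simp add: right_ideal_span.add)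
      qed
    qed
  qed
  have "G \<subseteq> J"
    using F(2) defect_J J unfolding G_def D_def alg_ideal_def by blast
  moreover have "finite G" unfolding G_def D_def using F(1) by (simp add: finite_image_set2)
  moreover have "s a * y \<in> ?I" if "a \<in> A" "y \<in> ?I" for a y
    by (rule linear_left_mult_span_into_subspace[OF KR s I, where F = F])
      (use F_left that F(3) in simp_all)
  ultimately show thesis using that defects by blast
qed

lemma vn_regular_alg_hom_lift_subalgebra:
  fixes sR :: "'k::field \<Rightarrow> 'r::ring \<Rightarrow> 'r" and sQ :: "'k \<Rightarrow> 'q::ring \<Rightarrow> 'q"
  assumes KR: "K_algebra sR" and KQ: "K_algebra sQ" and reg: "vn_regular TYPE('r)"
    and hom: "alg_hom sR sQ \<pi>" and surj: "surj \<pi>"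
    and A: "subalgebra sQ A" "fin_dim sQ A"
  shows "\<exists>T. subalgebra sR T \<and> fin_dim sR T \<and> bij_betw \<pi> T A"
proof -
  interpret QR: vector_space_pair sQ sR
    using KQ KR unfolding K_algebra_def vector_space_pair_def by blast
  interpret RQ: vector_space_pair sR sQ by unfold_locales
  interpret \<pi>: Vector_Spaces.linear sR sQ \<pi> using hom unfolding alg_hom_def by blast
  have \<pi>_mult: "\<pi> (x * y) = \<pi> x * \<pi> y" for x y using hom unfolding alg_hom_def by blast
  obtain s where s: "Vector_Spaces.linear sQ sR s" and "\<pi> \<circ> s = id"
    using RQ.linear_surjective_right_inverse[OF \<pi>.linear_axioms surj] by blast
  then have \<pi>_s: "\<pi> (s q) = q" for q by (metis comp_apply id_apply)
  have "s a * s b - s (a * b) \<in> {x. \<pi> x = 0}" for a b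
    by (simp add: \<pi>.diff \<pi>_mult \<pi>_s)
  then obtain G where G: "G \<subseteq> {x. \<pi> x = 0}" "finite G"
    and defects: "\<And>a b. a \<in> A \<Longrightarrow> b \<in> A \<Longrightarrow> s a * s b - s (a * b) \<in> right_ideal_span sR G"
    and left: "\<And>a y. a \<in> A \<Longrightarrow> y \<in> right_ideal_span sR G \<Longrightarrow> s a * y \<in> right_ideal_span sR G"
    by (rule finite_right_ideal_absorbing_defects[OF KR KQ s A alg_hom_kernel_ideal[OF hom]]) simp
  obtain f where f: "f \<in> right_ideal_span sR G" and "\<forall>g\<in>G. f * g = g"
    using vn_regular_right_ideal_span_idempotent[OF reg G(2)] by blast
  then have f_unit: "\<And>y. y \<in> right_ideal_span sR G \<Longrightarrow> f * y = y"
    using right_ideal_span_left_unit[OF KR] by blast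
  have "\<pi> f = 0"
    using f right_ideal_span_subset[OF KR alg_hom_kernel_ideal[OF hom] G(1)] by blast
  define g where "g a = s a - f * s a" for a
  have "Vector_Spaces.linear sQ sR g"
    unfolding g_def using s Vector_Spaces.linear_compose[OF s K_algebra_linear_mult_left[OF KR]]
    by (intro QR.linear_compose_sub) (simp_all add: o_def)
  moreover have "g a * g b = g (a * b)" if "a \<in> A" "b \<in> A" for a b
    unfolding g_def using that f_unit left f defects by (intro idempotent_correction_mult) simp_all
  moreover have "\<pi> (g a) = a" for a
    using \<open>\<pi> f = 0\<close> by (simp add: g_def \<pi>.diff \<pi>_mult \<pi>_s)
  ultimately show ?thesis using linear_section_image_subalgebra A by blast
qed

lemma linear_bij_subspace_complements_kernel:
  assumes "Vector_Spaces.linear s1 s2 \<pi>" "module.subspace s1 T" "bij_betw \<pi> T UNIV"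
  shows "T \<inter> {x. \<pi> x = 0} = {0} \<and> (\<forall>x. \<exists>t\<in>T. \<exists>j\<in>{x. \<pi> x = 0}. x = t + j)"
proof -
  interpret Vector_Spaces.linear s1 s2 \<pi> by (fact assms(1))
  have "T \<inter> {x. \<pi> x = 0} = {0}"
    using assms(2,3) inj_on_iff_eq_0 vs1.subspace_0 unfolding bij_betw_def by auto
  moreover have "\<exists>t\<in>T. \<exists>j\<in>{x. \<pi> x = 0}. x = t + j" for x
  proof -
    obtain t where "t \<in> T" "\<pi> t = \<pi> x" using assms(3) unfolding bij_betw_def by (metis UNIV_I imageE)
    then show ?thesis by (intro bexI[of _ t] bexI[of _ "x - t"]) (simp_all add: diff)
  qed
  ultimately show ?thesis by blast
qed

theorem lemma3p2:
  fixes sR :: "'k::field \<Rightarrow> 'r::ring \<Rightarrow> 'r"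
    and sQ :: "'k \<Rightarrow> 'q::ring \<Rightarrow> 'q"
    and \<pi> :: "'r \<Rightarrow> 'q"
    and J :: "'r set"
  assumes "K_algebra sR" and "K_algebra sQ"
    and "vn_regular TYPE('r)"
    and "alg_ideal sR J"
    and "alg_hom sR sQ \<pi>" and "surj \<pi>" and "{x. \<pi> x = 0} = J"
  shows "(\<forall>A. subalgebra sQ A \<and> fin_dim sQ A \<longrightarrow>
            (\<exists>T. subalgebra sR T \<and> fin_dim sR T \<and> bij_betw \<pi> T A))
       \<and> (fin_dim sQ (UNIV :: 'q set) \<longrightarrow>
            (\<exists>T. subalgebra sR T \<and> T \<inter> J = {0} \<and>
                 (\<forall>x. \<exists>t\<in>T. \<exists>j\<in>J. x = t + j)))"
proof (intro conjI allI impI)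
  show lift: "\<exists>T. subalgebra sR T \<and> fin_dim sR T \<and> bij_betw \<pi> T A"
    if "subalgebra sQ A \<and> fin_dim sQ A" for A
    using vn_regular_alg_hom_lift_subalgebra[OF assms(1-3,5,6)] that by blast
  assume "fin_dim sQ (UNIV :: 'q set)"
  moreover have "subalgebra sQ (UNIV :: 'q set)"
  proof -
    interpret vector_space sQ using assms(2) unfolding K_algebra_def by blast
    show ?thesis unfolding subalgebra_def by simp
  qed
  ultimately obtain T where "subalgebra sR T" "bij_betw \<pi> T UNIV" using lift by blast
  then show "\<exists>T. subalgebra sR T \<and> T \<inter> J = {0} \<and> (\<forall>x. \<exists>t\<in>T. \<exists>j\<in>J. x = t + j)"
    using linear_bij_subspace_complements_kernel[of sR sQ \<pi> T] assms(5,7)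
    unfolding subalgebra_def alg_hom_def by blast
qed

end
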